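(* Let $Q=S^1\times S^1$ with angular coordinates $(\psi,\varphi)$ on a neighborhood $U$ of $(0,0)$, let $A,B,C,D_1,D_2>0$ be constants with $AC>B^2$, and consider $$\mathfrak H(\psi,\varphi,p_\psi,p_\varphi)=\frac{1}{2m(\psi,\varphi)}\big(Cp_\psi^2-2B\cos(\psi-\varphi)p_\psi p_\varphi+Ap_\varphi^2\big),\quad m=AC-B^2\cos^2(\psi-\varphi),$$ $h(\psi,\varphi)=D_1\cos\psi+D_2\cos\varphi$, and $W=\mathrm{span}\{\mathrm d\varphi\}$. For a constant $\gamma\notin\{-1,A/B\}$ set $x=\psi$, $y=\varphi+\gamma\psi$ and $b:=B\cos((1+\gamma)x-y)$. Then, shrinking $U$ if necessary, $\hat W:=(\mathbb F\mathfrak H)^{-1}(\mathrm{span}\{\partial/\partial x\})$ is a complement of $W$; the projection $\hat{\mathfrak p}$ onto $\hat W$ along $W$ satisfies $\hat{\mathfrak p}(\mathrm dx)=\frac{1}{A-\gamma b}\sigma$, $\hat{\mathfrak p}(\mathrm dy)=\frac{\gamma}{A-\gamma b}\sigma$ with $\sigma:=(\mathbb F\mathfrak H)^{-1}(\partial/\partial x)$; and for every quadratic form $\mathfrak K$ on $\hat W$, writing $\mathfrak K(a\sigma)=\tfrac12K a^2$ with $K>0$, the function $u:=\big(\frac{\partial h}{\partial x}\hat P^1+\frac{\partial h}{\partial y}\hat P^2\big)K$ (where $\hat P^1=\frac{1}{A-\gamma b}$, $\hat P^2=\frac{\gamma}{A-\gamma b}$) equals $u(x,y)=-\frac{D_1\sin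 x}{A-\gamma b}K(x,y)$. Consequently $\frac{\partial u}{\partial y}(0,0)=0$ and $\frac{\partial u}{\partial x}(0,0)=\frac{-D_1K(0,0)}{A-\gamma B}$, which is positive if and only if $\gamma>A/B$; hence, when $\mathfrak K$ solves the kinetic equation, the solution $\hat h(x,y)=\int_0^xu(t,y)\,\mathrm dt+\frac{\varpi}{2}y^2$ of the potential equation has a critical point with positive-definite Hessian at $(0,0)$ if and only if $\gamma>A/B$ and $\varpi>0$.
   Context: A quadratic form on a subbundle $V\subseteq T^*Q$ is $\mathfrak F(\alpha)=\tfrac12\langle\alpha,\rho^\sharp(\alpha)\rangle$ with $\rho$ a smooth positive-definite fibered inner product on $V^*$. $\mathbb F\mathfrak H:T^*Q\to TQ$ is the fiber derivative, $\langle\beta,\mathbb F\mathfrak H(\alpha)\rangle=\frac{d}{dt}\mathfrak H(\alpha+t\beta)|_{t=0}$, a bundle isomorphism. A complement of $W$ is a subbundle $\hat W$ with $T^*Q=\hat W\oplus W$. The kinetic equation for $\mathfrak K$ is $\{\mathfrak K\circ\hat{\mathfrak p},\mathfrak H\}(\sigma)=0$ for all $\sigma\in\hat W$ ($\{\cdot,\cdot\}$ the canonical Poisson bracket), and the potential equation for $\hat h:Q\to\mathbb R$ is $\big(\mathrm d\hat h\circ\mathbb F\mathfrak H-\mathrm dh\circ\mathbb F(\mathfrak K\circ\hat{\mathfrak p})\big)(\sigma)=0$ for all $\sigma\in\hat W$, which in the coordinates $(x,y)$ reads $\partial\hat h/\partial x=u$. Functions are identified with their local representatives in the coordinates $(x,y)$.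 *)

theory Defs
  imports "HOL-Analysis.Analysis"
begin

(* Everything is expressed in the local chart (psi,phi) of Q = S^1 x S^1 around (0,0).
   Points q = (psi,phi) :: real*real.  Covectors at q are given by their components
   (p_psi,p_phi) in the basis (d psi, d phi); tangent vectors by their components in
   (d/d psi, d/d phi). *)
definition pairing :: "real \<times> real \<Rightarrow> real \<times> real \<Rightarrow> real" where
  "pairing \<beta> v = fst \<beta> * fst v + snd \<beta> * snd v"

definition mfun :: "real \<Rightarrow> real \<Rightarrow> real \<Rightarrow> real \<times> real \<Rightarrow> real" where
  "mfun A B C q = A * C - B\<^sup>2 * (cos (fst q - snd q))\<^sup>2"

definition Ham :: "real \<Rightarrow> real \<Rightarrow> real \<Rightarrow> real \<times> real \<Rightarrow> real \<times> real \<Rightarrow> real" where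
  "Ham A B C q \<alpha> = (C * (fst \<alpha>)\<^sup>2 - 2 * B * cos (fst q - snd q) * fst \<alpha> * snd \<alpha>
                      + A * (snd \<alpha>)\<^sup>2) / (2 * mfun A B C q)"

(* fiber derivative at a point: <beta, FH(alpha)> = d/dt H(alpha + t beta) at t=0,
   evaluated on the basis covectors d psi = (1,0), d phi = (0,1) *)
definition fiberD :: "(real \<times> real \<Rightarrow> real) \<Rightarrow> real \<times> real \<Rightarrow> real \<times> real" where
  "fiberD Hq \<alpha> = (deriv (\<lambda>t. Hq (\<alpha> + t *\<^sub>R (1, 0))) 0, deriv (\<lambda>t. Hq (\<alpha> + t *\<^sub>R (0, 1))) 0)"

definition xy_of :: "real \<Rightarrow> real \<times> real \<Rightarrow> real \<times> real" where
  "xy_of \<gamma> q = (fst q, snd q + \<gamma> * fst q)"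

definition psiphi_of :: "real \<Rightarrow> real \<times> real \<Rightarrow> real \<times> real" where
  "psiphi_of \<gamma> z = (fst z, snd z - \<gamma> * fst z)"

(* dx = d psi, dy = d phi + gamma d psi, and d/dx = d/dpsi - gamma d/dphi,
   written in the (psi,phi) bases *)
definition dx_cov :: "real \<times> real" where "dx_cov = (1, 0)"
definition dy_cov :: "real \<Rightarrow> real \<times> real" where "dy_cov \<gamma> = (\<gamma>, 1)"
definition dx_vec :: "real \<Rightarrow> real \<times> real" where "dx_vec \<gamma> = (1, - \<gamma>)"

definition Wsp :: "(real \<times> real) set" where
  "Wsp = range (\<lambda>t. t *\<^sub>R (0, 1))"

definition What :: "real \<Rightarrow> real \<Rightarrow> real \<Rightarrow> real \<Rightarrow> real \<times> real \<Rightarrow> (real \<times> real) set" where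
  "What A B C \<gamma> q = {\<alpha>. \<exists>t. fiberD (Ham A B C q) \<alpha> = t *\<^sub>R dx_vec \<gamma>}"

definition sigma :: "real \<Rightarrow> real \<Rightarrow> real \<Rightarrow> real \<Rightarrow> real \<times> real \<Rightarrow> real \<times> real" where
  "sigma A B C \<gamma> q = (THE \<alpha>. fiberD (Ham A B C q) \<alpha> = dx_vec \<gamma>)"

definition is_complement :: "(real \<times> real) set \<Rightarrow> (real \<times> real) set \<Rightarrow> bool" where
  "is_complement Wh W \<longleftrightarrow> subspace Wh \<and> subspace W \<and> Wh \<inter> W = {0}
      \<and> (\<forall>\<alpha>. \<exists>w1\<in>Wh. \<exists>w2\<in>W. \<alpha> = w1 + w2)"

definition proj :: "(real \<times> real) set \<Rightarrow> (real \<times> real) set \<Rightarrow> real \<times> real \<Rightarrow> real \<times> real" where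
  "proj Wh W \<alpha> = (THE w. w \<in> Wh \<and> \<alpha> - w \<in> W)"

definition bfun :: "real \<Rightarrow> real \<Rightarrow> real \<times> real \<Rightarrow> real" where
  "bfun B \<gamma> z = B * cos ((1 + \<gamma>) * fst z - snd z)"

definition px :: "(real \<times> real \<Rightarrow> real) \<Rightarrow> real \<times> real \<Rightarrow> real" where
  "px f z = deriv (\<lambda>t. f (t, snd z)) (fst z)"
definition py :: "(real \<times> real \<Rightarrow> real) \<Rightarrow> real \<times> real \<Rightarrow> real" where
  "py f z = deriv (\<lambda>t. f (fst z, t)) (snd z)"

(* C^infinity functions of two real variables on a set S *)
coinductive smooth2 :: "(real \<times> real) set \<Rightarrow> (real \<times> real \<Rightarrow> real) \<Rightarrow> bool" for S where
  "continuous_on S f \<Longrightarrow>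
   (\<forall>z\<in>S. (f has_derivative (\<lambda>v. fst v * g1 z + snd v * g2 z)) (at z)) \<Longrightarrow>
   smooth2 S g1 \<Longrightarrow> smooth2 S g2 \<Longrightarrow> smooth2 S f"

definition hfun :: "real \<Rightarrow> real \<Rightarrow> real \<times> real \<Rightarrow> real" where
  "hfun D1 D2 q = D1 * cos (fst q) + D2 * cos (snd q)"

definition Phat1 :: "real \<Rightarrow> real \<Rightarrow> real \<Rightarrow> real \<times> real \<Rightarrow> real" where
  "Phat1 A B \<gamma> z = 1 / (A - \<gamma> * bfun B \<gamma> z)"
definition Phat2 :: "real \<Rightarrow> real \<Rightarrow> real \<Rightarrow> real \<times> real \<Rightarrow> real" where
  "Phat2 A B \<gamma> z = \<gamma> / (A - \<gamma> * bfun B \<gamma> z)"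

definition ufun :: "real \<Rightarrow> real \<Rightarrow> real \<Rightarrow> real \<Rightarrow> real \<Rightarrow> (real \<times> real \<Rightarrow> real)
                      \<Rightarrow> real \<times> real \<Rightarrow> real" where
  "ufun A B D1 D2 \<gamma> K z =
     (px (\<lambda>w. hfun D1 D2 (psiphi_of \<gamma> w)) z * Phat1 A B \<gamma> z
      + py (\<lambda>w. hfun D1 D2 (psiphi_of \<gamma> w)) z * Phat2 A B \<gamma> z) * K z"

(* the function K o hat p on T*Q, where hat p(alpha) = a sigma and K(a sigma) = K a^2/2 *)
definition KP :: "real \<Rightarrow> real \<Rightarrow> real \<Rightarrow> real \<Rightarrow> (real \<times> real \<Rightarrow> real)
                   \<Rightarrow> (real \<times> real) \<times> (real \<times> real) \<Rightarrow> real" where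
  "KP A B C \<gamma> K z = (let q = fst z; \<alpha> = snd z;
      a = (THE a. proj (What A B C \<gamma> q) Wsp \<alpha> = a *\<^sub>R sigma A B C \<gamma> q)
    in K (xy_of \<gamma> q) * a\<^sup>2 / 2)"

definition dd :: "((real \<times> real) \<times> (real \<times> real) \<Rightarrow> real) \<Rightarrow> (real \<times> real) \<times> (real \<times> real)
                   \<Rightarrow> (real \<times> real) \<times> (real \<times> real) \<Rightarrow> real" where
  "dd F z e = deriv (\<lambda>t. F (z + t *\<^sub>R e)) 0"

definition pbracket :: "((real \<times> real) \<times> (real \<times> real) \<Rightarrow> real) \<Rightarrow> ((real \<times> real) \<times> (real \<times> real) \<Rightarrow> real)
                        \<Rightarrow> (real \<times> real) \<times> (real \<times> real) \<Rightarrow> real" where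
  "pbracket F G z =
      dd F z ((1,0),(0,0)) * dd G z ((0,0),(1,0)) + dd F z ((0,1),(0,0)) * dd G z ((0,0),(0,1))
    - dd F z ((0,0),(1,0)) * dd G z ((1,0),(0,0)) - dd F z ((0,0),(0,1)) * dd G z ((0,1),(0,0))"

definition kinetic_eq :: "real \<Rightarrow> real \<Rightarrow> real \<Rightarrow> real \<Rightarrow> (real \<times> real) set \<Rightarrow> (real \<times> real \<Rightarrow> real) \<Rightarrow> bool" where
  "kinetic_eq A B C \<gamma> U K \<longleftrightarrow>
     (\<forall>q\<in>U. \<forall>s\<in>What A B C \<gamma> q.
        pbracket (KP A B C \<gamma> K) (\<lambda>z. Ham A B C (fst z) (snd z)) (q, s) = 0)"

definition oint :: "real \<Rightarrow> real \<Rightarrow> (real \<Rightarrow> real) \<Rightarrow> real" where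
  "oint a b f = (if a \<le> b then integral {a..b} f else - integral {b..a} f)"

definition hhat :: "(real \<times> real \<Rightarrow> real) \<Rightarrow> real \<Rightarrow> real \<times> real \<Rightarrow> real" where
  "hhat u varpi z = oint 0 (fst z) (\<lambda>t. u (t, snd z)) + varpi / 2 * (snd z)\<^sup>2"

definition crit_posdef :: "(real \<times> real \<Rightarrow> real) \<Rightarrow> real \<times> real \<Rightarrow> bool" where
  "crit_posdef f z \<longleftrightarrow> px f z = 0 \<and> py f z = 0 \<and>
     (\<forall>a b. (a, b) \<noteq> (0, 0) \<longrightarrow>
        a\<^sup>2 * px (px f) z + a * b * (px (py f) z + py (px f) z) + b\<^sup>2 * py (py f) z > 0)"

end

theory Submission
  imports Defs
begin

text \<open>In the chart, the fibre derivative of the Hamiltonian is the linear map with matrix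
  \<open>(1/m) [[C, -B c], [-B c, A]]\<close>, \<open>c = cos (\<psi> - \<phi>)\<close>, invertible because \<open>m > 0\<close>.
  Solving for \<open>\<partial>/\<partial>x = (1, -\<gamma>)\<close> gives \<open>\<sigma> = (A - \<gamma> B c, B c - \<gamma> C)\<close>, whose first component is
  \<open>A - \<gamma> b\<close> in the coordinates \<open>(x, y)\<close>. At the origin this is \<open>A - \<gamma> B \<noteq> 0\<close>, so on a small square
  the line spanned by \<open>\<sigma>\<close> is complementary to \<open>span {d\<phi>}\<close>, and projecting a covector along
  \<open>d\<phi>\<close> just divides its first component by that of \<open>\<sigma>\<close>.

  In \<open>u\<close> the two contributions of the \<open>\<phi>\<close>-dependence of \<open>h\<close> cancel, leaving
  \<open>-D\<^sub>1 sin x K / (A - \<gamma> b)\<close>. As \<open>u\<close> vanishes on \<open>x = 0\<close>, the potential \<open>hhat\<close> has zero gradient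
  and zero mixed second partials at the origin, so its Hessian there is
  \<open>diag (\<partial>u/\<partial>x (0,0), \<varpi>)\<close>.\<close>

lemma oint_has_real_derivative:
  fixes h :: "real \<Rightarrow> real"
  assumes h: "continuous_on {a<..<b} h" and "a < 0" "0 < b" and x: "x \<in> {a<..<b}"
  shows "((\<lambda>t. oint 0 t h) has_real_derivative h x) (at x)"
proof -
  define c where "c = (a + min 0 x) / 2"
  define d where "d = (b + max 0 x) / 2"
  have cd: "a < c" "c < min 0 x" "max 0 x < d" "d < b" using assms by (auto simp: c_def d_def)
  have hcd: "continuous_on {c..d} h" using cd by (intro continuous_on_subset[OF h]) auto
  have int: "h integrable_on {c..t}" if "t \<le> d" for t
    using that by (intro integrable_subinterval_real[OF integrable_continuous_interval[OF hcd]]) auto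
  have oint_eq: "oint 0 t h = integral {c..t} h - integral {c..0} h" if t: "t \<in> {c<..<d}" for t
  proof (cases "0 \<le> t")
    case True
    have "integral {c..0} h + integral {0..t} h = integral {c..t} h"
      by (rule Henstock_Kurzweil_Integration.integral_combine) (use cd t True int in auto)
    then show ?thesis using True by (simp add: oint_def)
  next
    case False
    have "integral {c..t} h + integral {t..0} h = integral {c..0} h"
      by (rule Henstock_Kurzweil_Integration.integral_combine) (use cd t False int in auto)
    then show ?thesis using False by (simp add: oint_def algebra_simps)
  qed
  have "((\<lambda>t. integral {c..t} h) has_real_derivative h x) (at x within {c<..<d})"
    using cd by (intro has_field_derivative_subset[OF integral_has_real_derivative[OF hcd]]) auto
  then have "((\<lambda>t. integral {c..t} h - integral {c..0} h) has_real_derivative h x) (at x)"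
    using cd by (subst (asm) at_within_open) (auto intro!: derivative_eq_intros)
  then show ?thesis
    by (rule has_field_derivative_transform_within_open[where S="{c<..<d}"]) (use cd oint_eq in auto)
qed

lemma continuous_on_Pair_slice:
  fixes u :: "'a::topological_space \<times> 'b::topological_space \<Rightarrow> 'c::topological_space"
  assumes "continuous_on (X \<times> Y) u" "y \<in> Y"
  shows "continuous_on X (\<lambda>x. u (x, y))"
  using assms by (intro continuous_on_compose2[OF assms(1)] continuous_intros) auto

lemma integral_param_has_real_derivative:
  fixes u uy :: "real \<times> real \<Rightarrow> real"
  assumes cu: "continuous_on ({a..b} \<times> Y) u" and cuy: "continuous_on ({a..b} \<times> Y) uy"
    and Y: "open Y" "convex Y" "y \<in> Y"
    and dy: "\<And>x s. x \<in> {a..b} \<Longrightarrow> s \<in> Y \<Longrightarrow> ((\<lambda>s. u (x, s)) has_real_derivative uy (x, s)) (at s)"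
  shows "((\<lambda>s. integral {a..b} (\<lambda>x. u (x, s))) has_real_derivative integral {a..b} (\<lambda>x. uy (x, y))) (at y)"
proof -
  have "((\<lambda>s. integral (cbox a b) (\<lambda>x. u (x, s))) has_real_derivative
          integral (cbox a b) (\<lambda>x. uy (x, y))) (at y within Y)"
  proof (rule leibniz_rule_field_derivative[where fx="\<lambda>s x. uy (x, s)"])
    have swap: "continuous_on (Y \<times> cbox a b) (\<lambda>p. (snd p, fst p))"
      by (intro continuous_on_Pair continuous_on_fst continuous_on_snd continuous_on_id)
    have "continuous_on (Y \<times> cbox a b) (\<lambda>p. uy (snd p, fst p))"
      by (rule continuous_on_compose2[OF cuy swap]) (auto simp: cbox_interval)
    then show "continuous_on (Y \<times> cbox a b) (\<lambda>(s, x). uy (x, s))"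
      by (simp add: split_beta)
    show "(\<lambda>x. u (x, s)) integrable_on cbox a b" if "s \<in> Y" for s
      unfolding cbox_interval by (rule integrable_continuous_interval[OF continuous_on_Pair_slice[OF cu that]])
  next
    fix s x assume "s \<in> Y" "x \<in> cbox a b"
    then show "((\<lambda>s. u (x, s)) has_real_derivative uy (x, s)) (at s within Y)"
      using dy by (simp add: cbox_interval has_field_derivative_at_within)
  qed (use Y in auto)
  then show ?thesis by (simp only: cbox_interval at_within_open[OF Y(3,1)])
qed

lemma oint_param_has_real_derivative:
  fixes u uy :: "real \<times> real \<Rightarrow> real"
  assumes cu: "continuous_on (X \<times> Y) u" and cuy: "continuous_on (X \<times> Y) uy"
    and X: "is_interval X" "0 \<in> X" "t \<in> X" and Y: "open Y" "convex Y" "y \<in> Y"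
    and dy: "\<And>x s. x \<in> X \<Longrightarrow> s \<in> Y \<Longrightarrow> ((\<lambda>s. u (x, s)) has_real_derivative uy (x, s)) (at s)"
  shows "((\<lambda>s. oint 0 t (\<lambda>x. u (x, s))) has_real_derivative oint 0 t (\<lambda>x. uy (x, y))) (at y)"
proof -
  have sub: "{min 0 t..max 0 t} \<subseteq> X"
  proof
    fix x assume "x \<in> {min 0 t..max 0 t}"
    then show "x \<in> X"
      using X(1)[unfolded is_interval_1, rule_format, of 0 t x] X(1)[unfolded is_interval_1, rule_format, of t 0 x] X(2,3)
      by (cases "0 \<le> t") auto
  qed
  have D: "((\<lambda>s. integral {min 0 t..max 0 t} (\<lambda>x. u (x, s))) has_real_derivative
             integral {min 0 t..max 0 t} (\<lambda>x. uy (x, y))) (at y)"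
    using sub by (intro integral_param_has_real_derivative[OF _ _ Y] dy
        continuous_on_subset[OF cu] continuous_on_subset[OF cuy]) auto
  show ?thesis
  proof (cases "0 \<le> t")
    case True
    then have "min 0 t = 0" "max 0 t = t" by auto
    with D True show ?thesis unfolding oint_def by (simp only: if_True)
  next
    case False
    then have "min 0 t = t" "max 0 t = 0" by auto
    with DERIV_minus[OF D] False show ?thesis unfolding oint_def by (simp only: if_False)
  qed
qed

lemma diagonal_form_pos_iff:
  fixes p q :: real
  shows "(\<forall>a b. (a, b) \<noteq> (0, 0) \<longrightarrow> a\<^sup>2 * p + b\<^sup>2 * q > 0) \<longleftrightarrow> p > 0 \<and> q > 0"
proof
  assume "\<forall>a b. (a, b) \<noteq> (0, 0) \<longrightarrow> a\<^sup>2 * p + b\<^sup>2 * q > 0"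
  from this[rule_format, of 1 0] this[rule_format, of 0 1] show "p > 0 \<and> q > 0" by simp
next
  assume pq: "p > 0 \<and> q > 0"
  show "\<forall>a b. (a, b) \<noteq> (0, 0) \<longrightarrow> a\<^sup>2 * p + b\<^sup>2 * q > 0"
  proof (intro allI impI)
    fix a b :: real assume "(a, b) \<noteq> (0, 0)"
    then have "a\<^sup>2 > 0 \<or> b\<^sup>2 > 0" by auto
    then show "a\<^sup>2 * p + b\<^sup>2 * q > 0"
      using pq by (auto intro: add_pos_nonneg add_nonneg_pos)
  qed
qed

lemma crit_posdef_hhat_iff:
  fixes u uy :: "real \<times> real \<Rightarrow> real" and r :: real
  defines "I \<equiv> {-r<..<r}"
  assumes r: "r > 0"
    and cu: "continuous_on (I \<times> I) u" and cuy: "continuous_on (I \<times> I) uy"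
    and dy: "\<And>x y. x \<in> I \<Longrightarrow> y \<in> I \<Longrightarrow> ((\<lambda>s. u (x, s)) has_real_derivative uy (x, y)) (at y)"
    and u0: "\<And>y. u (0, y) = 0"
  shows "crit_posdef (hhat u varpi) (0, 0) \<longleftrightarrow> px u (0, 0) > 0 \<and> varpi > 0"
proof -
  let ?H = "hhat u varpi"
  have I: "open I" "is_interval I" "convex I" "0 \<in> I" using r by (auto simp: I_def is_interval_convex_1)
  have uy0: "uy (0, 0) = 0"
    using DERIV_unique[OF dy[OF I(4) I(4)]] by (simp add: u0)
  have pxH: "px ?H (x, y) = u (x, y)" if "x \<in> I" "y \<in> I" for x y
  proof -
    have "((\<lambda>t. oint 0 t (\<lambda>s. u (s, y)) + varpi / 2 * y\<^sup>2) has_real_derivative u (x, y)) (at x)"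
      using oint_has_real_derivative[OF continuous_on_Pair_slice[OF cu[unfolded I_def] that(2)[unfolded I_def]]]
        r that by (auto simp: I_def intro!: derivative_eq_intros)
    then show ?thesis by (simp add: px_def hhat_def DERIV_imp_deriv)
  qed
  have pyH0: "py ?H (0, t) = varpi * t" for t
  proof -
    have "((\<lambda>s. varpi / 2 * s\<^sup>2) has_real_derivative varpi * t) (at t)"
      by (auto intro!: derivative_eq_intros)
    then show ?thesis by (simp add: py_def hhat_def oint_def DERIV_imp_deriv)
  qed
  have pyHx: "py ?H (t, 0) = oint 0 t (\<lambda>x. uy (x, 0))" if "t \<in> I" for t
  proof -
    have "((\<lambda>s. oint 0 t (\<lambda>x. u (x, s)) + varpi / 2 * s\<^sup>2) has_real_derivative
            oint 0 t (\<lambda>x. uy (x, 0)) + 0) (at 0)"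
      by (intro DERIV_add oint_param_has_real_derivative[OF cu cuy] dy that I)
        (auto intro!: derivative_eq_intros)
    then show ?thesis by (simp add: py_def hhat_def DERIV_imp_deriv)
  qed
  have Hx: "px ?H (0, 0) = 0" using pxH[of 0 0] I u0 by simp
  have Hy: "py ?H (0, 0) = 0" using pyH0[of 0] by simp
  have Hxx: "px (px ?H) (0, 0) = px u (0, 0)"
    unfolding px_def[of "px ?H"] px_def[of u]
  proof (simp, rule deriv_cong_ev)
    show "\<forall>\<^sub>F x in nhds 0. px ?H (x, 0) = u (x, 0)"
      using eventually_nhds_in_open[OF I(1,4)] by eventually_elim (use I in \<open>simp add: pxH\<close>)
  qed simp
  have Hyy: "py (py ?H) (0, 0) = varpi"
  proof -
    have "((\<lambda>t. py ?H (0, t)) has_real_derivative varpi) (at 0)"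
      unfolding pyH0 by (auto intro!: derivative_eq_intros)
    then show ?thesis by (simp add: py_def[of "py ?H"] DERIV_imp_deriv)
  qed
  have Hxy: "py (px ?H) (0, 0) = 0"
  proof -
    have "((\<lambda>t. px ?H (0, t)) has_real_derivative 0) (at 0)"
      by (rule has_field_derivative_transform_within_open[OF _ I(1,4), of "\<lambda>t. 0"])
        (use pxH I u0 in auto)
    then show ?thesis by (simp add: py_def[of "px ?H"] DERIV_imp_deriv)
  qed
  have Hyx: "px (py ?H) (0, 0) = 0"
  proof -
    have "((\<lambda>t. oint 0 t (\<lambda>x. uy (x, 0))) has_real_derivative 0) (at 0)"
      using oint_has_real_derivative[OF continuous_on_Pair_slice[OF cuy[unfolded I_def]], of 0 0] r
      by (simp add: uy0)
    then have "((\<lambda>t. py ?H (t, 0)) has_real_derivative 0) (at 0)"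
      by (rule has_field_derivative_transform_within_open[OF _ I(1,4)]) (simp add: pyHx)
    then show ?thesis by (simp add: px_def[of "py ?H"] DERIV_imp_deriv)
  qed
  have "crit_posdef ?H (0, 0) \<longleftrightarrow>
          (\<forall>a b. (a, b) \<noteq> (0, 0) \<longrightarrow> a\<^sup>2 * px u (0, 0) + b\<^sup>2 * varpi > 0)"
    by (simp add: crit_posdef_def Hx Hy Hxx Hyy Hxy Hyx)
  also have "\<dots> \<longleftrightarrow> px u (0, 0) > 0 \<and> varpi > 0"
    by (rule diagonal_form_pos_iff)
  finally show ?thesis .
qed

lemma mfun_pos:
  assumes "A * C > B\<^sup>2" shows "mfun A B C q > 0"
proof -
  have "(cos (fst q - snd q))\<^sup>2 \<le> 1" by (simp add: abs_square_le_1)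
  then have "B\<^sup>2 * (cos (fst q - snd q))\<^sup>2 \<le> B\<^sup>2" by (simp add: mult_left_le)
  then show ?thesis using assms by (simp add: mfun_def)
qed

lemma fiberD_Ham:
  assumes "mfun A B C q \<noteq> 0"
  shows "fiberD (Ham A B C q) \<alpha> =
    ((C * fst \<alpha> - B * cos (fst q - snd q) * snd \<alpha>) / mfun A B C q,
     (A * snd \<alpha> - B * cos (fst q - snd q) * fst \<alpha>) / mfun A B C q)"
proof -
  obtain a1 a2 where \<alpha>: "\<alpha> = (a1, a2)" by (cases \<alpha>)
  define c where "c = cos (fst q - snd q)"
  define m where "m = mfun A B C q"
  have "((\<lambda>t. (C * (a1 + t)\<^sup>2 - 2 * B * c * (a1 + t) * a2 + A * a2\<^sup>2) / (2 * m))
          has_real_derivative (C * a1 - B * c * a2) / m) (at 0)"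
   and "((\<lambda>t. (C * a1\<^sup>2 - 2 * B * c * a1 * (a2 + t) + A * (a2 + t)\<^sup>2) / (2 * m))
          has_real_derivative (A * a2 - B * c * a1) / m) (at 0)"
    using assms unfolding m_def[symmetric] by (auto intro!: derivative_eq_intros simp: field_simps)
  then show ?thesis
    by (simp add: fiberD_def Ham_def \<alpha> c_def m_def DERIV_imp_deriv)
qed

lemma fiberD_Ham_inj:
  assumes "A * C > B\<^sup>2" "A > 0"
    and eq: "fiberD (Ham A B C q) \<alpha> = fiberD (Ham A B C q) \<beta>"
  shows "\<alpha> = \<beta>"
proof -
  define c where "c = cos (fst q - snd q)"
  define d1 where "d1 = fst \<alpha> - fst \<beta>"
  define d2 where "d2 = snd \<alpha> - snd \<beta>"
  have m: "mfun A B C q > 0" by (rule mfun_pos[OF assms(1)])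
  with eq have "C * d1 = B * c * d2" and d2: "A * d2 = B * c * d1"
    by (auto simp: fiberD_Ham c_def d1_def d2_def algebra_simps)
  then have "mfun A B C q * d1 = 0"
    by (simp add: mfun_def c_def power2_eq_square algebra_simps)
  with m have "d1 = 0" by simp
  with d2 \<open>A > 0\<close> have "d2 = 0" by simp
  with \<open>d1 = 0\<close> show ?thesis by (simp add: d1_def d2_def prod_eq_iff)
qed

lemma fiberD_Ham_preimage_dx_vec:
  assumes "A * C > B\<^sup>2"
  shows "fiberD (Ham A B C q)
           (t *\<^sub>R (A - \<gamma> * (B * cos (fst q - snd q)), B * cos (fst q - snd q) - \<gamma> * C))
         = t *\<^sub>R dx_vec \<gamma>"
proof -
  define c where "c = cos (fst q - snd q)"
  have m: "mfun A B C q = A * C - B * c * (B * c)"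
    by (simp add: mfun_def c_def power2_eq_square)
  show ?thesis
    using mfun_pos[OF assms, of q] by (simp add: fiberD_Ham dx_vec_def c_def[symmetric] m field_simps)
qed

lemma sigma_eq:
  assumes "A * C > B\<^sup>2" "A > 0"
  shows "sigma A B C \<gamma> q = (A - \<gamma> * (B * cos (fst q - snd q)), B * cos (fst q - snd q) - \<gamma> * C)"
  unfolding sigma_def
proof (rule the_equality)
  show pair: "fiberD (Ham A B C q) (A - \<gamma> * (B * cos (fst q - snd q)), B * cos (fst q - snd q) - \<gamma> * C)
        = dx_vec \<gamma>"
    using fiberD_Ham_preimage_dx_vec[OF assms(1), of q 1] by (simp only: scaleR_one)
  show "\<alpha> = (A - \<gamma> * (B * cos (fst q - snd q)), B * cos (fst q - snd q) - \<gamma> * C)"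
    if "fiberD (Ham A B C q) \<alpha> = dx_vec \<gamma>" for \<alpha>
    by (rule fiberD_Ham_inj[OF assms, of q]) (simp only: that pair)
qed

lemma What_eq:
  assumes "A * C > B\<^sup>2" "A > 0"
  shows "What A B C \<gamma> q = range (\<lambda>t. t *\<^sub>R sigma A B C \<gamma> q)"
proof -
  have "fiberD (Ham A B C q) \<alpha> = t *\<^sub>R dx_vec \<gamma> \<longleftrightarrow> \<alpha> = t *\<^sub>R sigma A B C \<gamma> q" for \<alpha> t
    using fiberD_Ham_inj[OF assms] fiberD_Ham_preimage_dx_vec[OF assms(1)]
    unfolding sigma_eq[OF assms] by metis
  then show ?thesis by (auto simp: What_def)
qed

lemma fst_sigma:
  assumes "A * C > B\<^sup>2" "A > 0"
  shows "fst (sigma A B C \<gamma> q) = A - \<gamma> * bfun B \<gamma> (xy_of \<gamma> q)"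
proof -
  have angle: "(1 + \<gamma>) * fst q - (snd q + \<gamma> * fst q) = fst q - snd q" by algebra
  show ?thesis unfolding sigma_eq[OF assms] bfun_def xy_of_def fst_conv snd_conv angle ..
qed

lemma is_complement_line_Wsp:
  fixes s :: "real \<times> real"
  assumes "fst s \<noteq> 0"
  shows "is_complement (range (\<lambda>t. t *\<^sub>R s)) Wsp"
  unfolding is_complement_def
proof (intro conjI allI)
  have "range (\<lambda>t. t *\<^sub>R s) = span {s}" "Wsp = span {(0, 1)}"
    by (simp_all add: Wsp_def span_singleton)
  then show "subspace (range (\<lambda>t. t *\<^sub>R s))" "subspace Wsp"
    by (metis subspace_span)+
  show "range (\<lambda>t. t *\<^sub>R s) \<inter> Wsp = {0}"
    using assms by (auto simp: Wsp_def prod_eq_iff)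
  fix \<alpha> :: "real \<times> real"
  have "\<alpha> = (fst \<alpha> / fst s) *\<^sub>R s + (snd \<alpha> - fst \<alpha> / fst s * snd s) *\<^sub>R (0, 1)"
    using assms by (simp add: prod_eq_iff)
  then show "\<exists>w1\<in>range (\<lambda>t. t *\<^sub>R s). \<exists>w2\<in>Wsp. \<alpha> = w1 + w2"
    unfolding Wsp_def by blast
qed

lemma proj_line_Wsp:
  fixes s :: "real \<times> real"
  assumes "fst s \<noteq> 0"
  shows "proj (range (\<lambda>t. t *\<^sub>R s)) Wsp \<alpha> = (fst \<alpha> / fst s) *\<^sub>R s"
  unfolding proj_def
proof (rule the_equality)
  have "\<alpha> - (fst \<alpha> / fst s) *\<^sub>R s = (snd \<alpha> - fst \<alpha> / fst s * snd s) *\<^sub>R (0, 1)"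
    using assms by (simp add: prod_eq_iff)
  then show "(fst \<alpha> / fst s) *\<^sub>R s \<in> range (\<lambda>t. t *\<^sub>R s) \<and> \<alpha> - (fst \<alpha> / fst s) *\<^sub>R s \<in> Wsp"
    unfolding Wsp_def by auto
  show "w = (fst \<alpha> / fst s) *\<^sub>R s" if hw: "w \<in> range (\<lambda>t. t *\<^sub>R s) \<and> \<alpha> - w \<in> Wsp" for w
  proof -
    obtain t u where w: "w = t *\<^sub>R s" and "\<alpha> - w = u *\<^sub>R (0, 1)"
      using hw unfolding Wsp_def by blast
    then have "fst \<alpha> = t * fst s" by (auto simp: prod_eq_iff)
    with w assms show ?thesis by simp
  qed
qed

lemma What_complement_and_proj:
  assumes "A * C > B\<^sup>2" "A > 0" and den: "A - \<gamma> * bfun B \<gamma> (xy_of \<gamma> q) \<noteq> 0"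
  shows "is_complement (What A B C \<gamma> q) Wsp
      \<and> proj (What A B C \<gamma> q) Wsp dx_cov
          = (1 / (A - \<gamma> * bfun B \<gamma> (xy_of \<gamma> q))) *\<^sub>R sigma A B C \<gamma> q
      \<and> proj (What A B C \<gamma> q) Wsp (dy_cov \<gamma>)
          = (\<gamma> / (A - \<gamma> * bfun B \<gamma> (xy_of \<gamma> q))) *\<^sub>R sigma A B C \<gamma> q"
  using is_complement_line_Wsp proj_line_Wsp den
  by (simp add: What_eq[OF assms(1,2)] flip: fst_sigma[OF assms(1,2)]) (simp add: dx_cov_def dy_cov_def)

lemma ufun_eq:
  "ufun A B D1 D2 \<gamma> K z = - (D1 * sin (fst z)) / (A - \<gamma> * bfun B \<gamma> z) * K z"
proof -
  obtain x y where z: "z = (x, y)" by (cases z)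
  define d where "d = A - \<gamma> * bfun B \<gamma> z"
  have "((\<lambda>t. D1 * cos t + D2 * cos (y - \<gamma> * t)) has_real_derivative
          - D1 * sin x + \<gamma> * D2 * sin (y - \<gamma> * x)) (at x)"
   and "((\<lambda>t. D1 * cos x + D2 * cos (t - \<gamma> * x)) has_real_derivative - D2 * sin (y - \<gamma> * x)) (at y)"
    by (auto intro!: derivative_eq_intros)
  then have "px (\<lambda>w. hfun D1 D2 (psiphi_of \<gamma> w)) z = - D1 * sin x + \<gamma> * D2 * sin (y - \<gamma> * x)"
    and "py (\<lambda>w. hfun D1 D2 (psiphi_of \<gamma> w)) z = - D2 * sin (y - \<gamma> * x)"
    by (simp_all add: px_def py_def hfun_def psiphi_of_def z DERIV_imp_deriv)
  then have "ufun A B D1 D2 \<gamma> K z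
      = ((- D1 * sin x + \<gamma> * D2 * sin (y - \<gamma> * x)) * (1 / d) + (- D2 * sin (y - \<gamma> * x)) * (\<gamma> / d)) * K z"
    by (simp add: ufun_def Phat1_def Phat2_def d_def)
  also have "\<dots> = - (D1 * sin x) / d * K z"
    by (simp add: add_divide_distrib[symmetric] algebra_simps)
  finally show ?thesis by (simp add: d_def z)
qed

lemma has_derivative_imp_partial_fst:
  assumes "(K has_derivative (\<lambda>v. fst v * a + snd v * b)) (at (x, y))"
  shows "((\<lambda>s. K (s, y)) has_real_derivative a) (at x)"
proof -
  have "((\<lambda>s. (s, y)) has_derivative (\<lambda>v. (v, 0))) (at x)"
    by (auto intro!: derivative_eq_intros)
  from has_derivative_compose[OF this assms] show ?thesis
    unfolding has_field_derivative_def by (rule has_derivative_eq_rhs) (auto simp: o_def mult.commute)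
qed

lemma has_derivative_imp_partial_snd:
  assumes "(K has_derivative (\<lambda>v. fst v * a + snd v * b)) (at (x, y))"
  shows "((\<lambda>s. K (x, s)) has_real_derivative b) (at y)"
proof -
  have "((\<lambda>s. (x, s)) has_derivative (\<lambda>v. (0, v))) (at y)"
    by (auto intro!: derivative_eq_intros)
  from has_derivative_compose[OF this assms] show ?thesis
    unfolding has_field_derivative_def by (rule has_derivative_eq_rhs) (auto simp: o_def mult.commute)
qed

lemma DERIV_scaled_quotient:
  fixes f g :: "real \<Rightarrow> real"
  assumes "(f has_real_derivative f') (at y)" "(g has_real_derivative g') (at y)" "g y \<noteq> 0"
  shows "((\<lambda>s. c * f s / g s) has_real_derivative c * (f' / g y - f y * g' / (g y)\<^sup>2)) (at y)"
  using DERIV_divide[OF DERIV_cmult[OF assms(1)] assms(2,3)]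
  by (rule DERIV_cong) (simp add: assms(3) field_simps power2_eq_square)

lemma ufun_has_partial_snd:
  assumes dK: "((\<lambda>s. K (x, s)) has_real_derivative k) (at y)"
    and den: "A - \<gamma> * bfun B \<gamma> (x, y) \<noteq> 0"
  shows "((\<lambda>s. ufun A B D1 D2 \<gamma> K (x, s)) has_real_derivative
          - (D1 * sin x) * (k / (A - \<gamma> * bfun B \<gamma> (x, y))
             + K (x, y) * (\<gamma> * B * sin ((1 + \<gamma>) * x - y)) / (A - \<gamma> * bfun B \<gamma> (x, y))\<^sup>2)) (at y)"
proof -
  have "((\<lambda>s. A - \<gamma> * bfun B \<gamma> (x, s)) has_real_derivative - (\<gamma> * B * sin ((1 + \<gamma>) * x - y))) (at y)"
    unfolding bfun_def by (auto intro!: derivative_eq_intros)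
  from DERIV_scaled_quotient[OF dK this den, of "- (D1 * sin x)"]
  show ?thesis by (simp add: ufun_eq)
qed

lemma ufun_partial_fst_origin:
  assumes dK: "((\<lambda>t. K (t, 0)) has_real_derivative k) (at 0)" and den: "A - \<gamma> * B \<noteq> 0"
  shows "px (ufun A B D1 D2 \<gamma> K) (0, 0) = - D1 * K (0, 0) / (A - \<gamma> * B)"
proof -
  have f: "((\<lambda>t. - (D1 * sin t) * K (t, 0)) has_real_derivative - D1 * K (0, 0)) (at 0)"
    by (rule DERIV_cong[OF DERIV_mult[OF DERIV_minus[OF DERIV_cmult[OF DERIV_sin]] dK]]) simp
  have g: "((\<lambda>t. A - \<gamma> * bfun B \<gamma> (t, 0)) has_real_derivative 0) (at 0)"
    unfolding bfun_def by (auto intro!: derivative_eq_intros)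
  have "(- D1 * K (0, 0) * (A - \<gamma> * B) - 0) / ((A - \<gamma> * B) * (A - \<gamma> * B))
        = - D1 * K (0, 0) / (A - \<gamma> * B)"
    using den by simp
  with DERIV_divide[OF f g] den have "((\<lambda>t. - (D1 * sin t) * K (t, 0) / (A - \<gamma> * bfun B \<gamma> (t, 0)))
                     has_real_derivative - D1 * K (0, 0) / (A - \<gamma> * B)) (at 0)"
    by (simp add: bfun_def)
  then show ?thesis by (simp add: px_def ufun_eq DERIV_imp_deriv)
qed

lemma isCont_nonzero_on_square:
  fixes f :: "real \<times> real \<Rightarrow> real"
  assumes "isCont f (0, 0)" "f (0, 0) \<noteq> 0"
  obtains r where "r > 0" "\<And>z. z \<in> {-r<..<r} \<times> {-r<..<r} \<Longrightarrow> f z \<noteq> 0"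
proof -
  obtain e where e: "e > 0" "\<And>z. dist (0, 0) z < e \<Longrightarrow> f z \<noteq> 0"
    using continuous_at_avoid[OF assms] by blast
  have "dist (0, 0) z < e" if "z \<in> {-e/2<..<e/2} \<times> {-e/2<..<e/2}" for z :: "real \<times> real"
  proof -
    have "dist (0, 0) z \<le> norm (fst z) + norm (snd z)"
      using norm_Pair_le[of "fst z" "snd z"] by (simp add: dist_norm flip: zero_prod_def)
    also have "\<dots> < e" using that by (auto simp: mem_Times_iff)
    finally show ?thesis .
  qed
  then show ?thesis using e by (intro that[of "e / 2"]) auto
qed

lemma ufun_on_square:
  fixes K :: "real \<times> real \<Rightarrow> real"
  assumes S: "S = {-r<..<r} \<times> {-r<..<r}" and r: "r > 0" and "B > 0" "D1 > 0"
    and den: "\<And>z. z \<in> S \<Longrightarrow> A - \<gamma> * bfun B \<gamma> z \<noteq> 0"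
    and K: "smooth2 S K" "\<forall>z\<in>S. K z > 0"
  shows "(\<forall>z\<in>S. ufun A B D1 D2 \<gamma> K z = - (D1 * sin (fst z)) / (A - \<gamma> * bfun B \<gamma> z) * K z)
      \<and> py (ufun A B D1 D2 \<gamma> K) (0, 0) = 0
      \<and> px (ufun A B D1 D2 \<gamma> K) (0, 0) = - D1 * K (0, 0) / (A - \<gamma> * B)
      \<and> (px (ufun A B D1 D2 \<gamma> K) (0, 0) > 0 \<longleftrightarrow> \<gamma> > A / B)
      \<and> (\<forall>varpi. crit_posdef (hhat (ufun A B D1 D2 \<gamma> K) varpi) (0, 0) \<longleftrightarrow> \<gamma> > A / B \<and> varpi > 0)"
proof -
  let ?u = "ufun A B D1 D2 \<gamma> K"
  let ?d = "\<lambda>z. A - \<gamma> * bfun B \<gamma> z"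
  have S0: "(0, 0) \<in> S" using r by (simp add: S)
  have AB: "A - \<gamma> * B \<noteq> 0" using den[OF S0] by (simp add: bfun_def)
  obtain g1 g2 where cK: "continuous_on S K"
    and dK: "\<And>z. z \<in> S \<Longrightarrow> (K has_derivative (\<lambda>v. fst v * g1 z + snd v * g2 z)) (at z)"
    and "smooth2 S g2"
    using K(1) by (cases rule: smooth2.cases) auto
  have cg2: "continuous_on S g2" using \<open>smooth2 S g2\<close> by (cases rule: smooth2.cases) simp
  have u0: "?u (0, y) = 0" for y by (simp add: ufun_eq)
  have Px: "px ?u (0, 0) = - D1 * K (0, 0) / (A - \<gamma> * B)"
    by (rule ufun_partial_fst_origin[OF has_derivative_imp_partial_fst[OF dK[OF S0]] AB])
  have "- D1 * K (0, 0) < 0" using K(2) S0 \<open>D1 > 0\<close> by simp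
  then have "px ?u (0, 0) > 0 \<longleftrightarrow> A - \<gamma> * B < 0"
    unfolding Px by (auto simp: zero_less_divide_iff divide_less_0_iff)
  also have "\<dots> \<longleftrightarrow> \<gamma> > A / B" using \<open>B > 0\<close> by (simp add: pos_divide_less_eq algebra_simps)
  finally have Ppos: "px ?u (0, 0) > 0 \<longleftrightarrow> \<gamma> > A / B" .
  define uy where "uy z = - (D1 * sin (fst z)) * (g2 z / ?d z
      + K z * (\<gamma> * B * sin ((1 + \<gamma>) * fst z - snd z)) / (?d z)\<^sup>2)" for z
  have cd: "continuous_on S ?d" unfolding bfun_def by (intro continuous_intros)
  have "continuous_on S (\<lambda>z. - (D1 * sin (fst z)) / ?d z * K z)"
    by (intro continuous_intros cK cd) (use den in auto)
  then have cu: "continuous_on S ?u" by (simp add: ufun_eq)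
  have cuy: "continuous_on S uy"
    unfolding uy_def by (intro continuous_intros cK cd cg2) (use den in auto)
  have dy: "((\<lambda>s. ?u (x, s)) has_real_derivative uy (x, y)) (at y)"
    if "x \<in> {-r<..<r}" "y \<in> {-r<..<r}" for x y
    using that ufun_has_partial_snd[OF has_derivative_imp_partial_snd[OF dK] den]
    by (simp add: uy_def S)
  have "crit_posdef (hhat ?u varpi) (0, 0) \<longleftrightarrow> px ?u (0, 0) > 0 \<and> varpi > 0" for varpi
    by (rule crit_posdef_hhat_iff[OF r cu[unfolded S] cuy[unfolded S] dy u0])
  moreover have "py ?u (0, 0) = 0" by (simp add: py_def u0)
  ultimately show ?thesis using Px unfolding Ppos by (simp add: ufun_eq)
qed

theorem mainTheorem10:
  fixes A B C D1 D2 \<gamma> :: real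
  assumes "A > 0" "B > 0" "C > 0" "D1 > 0" "D2 > 0" "A * C > B\<^sup>2"
    and "\<gamma> \<noteq> -1" "\<gamma> \<noteq> A / B"
  shows "\<exists>U. open U \<and> (0, 0) \<in> U \<and>
    (\<forall>q\<in>U.
        is_complement (What A B C \<gamma> q) Wsp
      \<and> proj (What A B C \<gamma> q) Wsp dx_cov
          = (1 / (A - \<gamma> * bfun B \<gamma> (xy_of \<gamma> q))) *\<^sub>R sigma A B C \<gamma> q
      \<and> proj (What A B C \<gamma> q) Wsp (dy_cov \<gamma>)
          = (\<gamma> / (A - \<gamma> * bfun B \<gamma> (xy_of \<gamma> q))) *\<^sub>R sigma A B C \<gamma> q) \<and>
    (\<forall>K. smooth2 (xy_of \<gamma> ` U) K \<and> (\<forall>z\<in>xy_of \<gamma> ` U. K z > 0) \<longrightarrow>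
        (\<forall>z\<in>xy_of \<gamma> ` U. ufun A B D1 D2 \<gamma> K z
            = - (D1 * sin (fst z)) / (A - \<gamma> * bfun B \<gamma> z) * K z)
      \<and> py (ufun A B D1 D2 \<gamma> K) (0, 0) = 0
      \<and> px (ufun A B D1 D2 \<gamma> K) (0, 0) = - D1 * K (0, 0) / (A - \<gamma> * B)
      \<and> (px (ufun A B D1 D2 \<gamma> K) (0, 0) > 0 \<longleftrightarrow> \<gamma> > A / B)
      \<and> (kinetic_eq A B C \<gamma> U K \<longrightarrow>
           (\<forall>varpi. crit_posdef (hhat (ufun A B D1 D2 \<gamma> K) varpi) (0, 0)
                   \<longleftrightarrow> \<gamma> > A / B \<and> varpi > 0)))"
proof -
  have "isCont (\<lambda>z. A - \<gamma> * bfun B \<gamma> z) (0, 0)" unfolding bfun_def by (intro continuous_intros)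
  moreover have "A - \<gamma> * bfun B \<gamma> (0, 0) \<noteq> 0" using assms(2,8) by (auto simp: bfun_def field_simps)
  ultimately obtain r where r: "r > 0"
    and den: "\<And>z. z \<in> {-r<..<r} \<times> {-r<..<r} \<Longrightarrow> A - \<gamma> * bfun B \<gamma> z \<noteq> 0"
    by (rule isCont_nonzero_on_square) auto
  define U where "U = xy_of \<gamma> -` ({-r<..<r} \<times> {-r<..<r})"
  have "open U" unfolding U_def xy_of_def
    by (intro continuous_open_vimage open_Times open_greaterThanLessThan continuous_intros)
  moreover have "(0, 0) \<in> U" using r by (simp add: U_def xy_of_def)
  moreover have image_U: "xy_of \<gamma> ` U = {-r<..<r} \<times> {-r<..<r}" unfolding U_def
    by (rule surj_image_vimage_eq, rule surjI[of _ "psiphi_of \<gamma>"]) (simp add: xy_of_def psiphi_of_def)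
  moreover have "A - \<gamma> * bfun B \<gamma> (xy_of \<gamma> q) \<noteq> 0" if "q \<in> U" for q
    using den that by (simp add: U_def)
  ultimately show ?thesis
    using What_complement_and_proj[OF assms(6,1)] ufun_on_square[OF image_U r assms(2,4)] den
    unfolding image_U[symmetric] by (intro exI[of _ U] conjI ballI allI impI) blast+
qed

end
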